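(* Let $S=K[t_1,\ldots,t_s]$ over a field $K$ with $s\geq2$, let $d_1\leq\cdots\leq d_s$ be positive integers with $d_1\geq2$, and let $L$ be the ideal generated by all $t_it_j^{d_j}$ with $1\leq i<j\leq s$. Let $t^a=t_r^{a_r}\cdots t_s^{a_s}$ be a monomial not in $L$ (a standard monomial of $S/L$ with respect to any monomial order), where $1\leq r\leq s$, $a_r\geq1$ and $a_i=0$ for $i<r$. Then $0\leq a_i\leq d_i-1$ for $i>r$ and $$\deg(S/(L,t^a))=\begin{cases}\deg(S/L)-\sum_{i=2}^{s}(d_i-a_i)\cdots(d_s-a_s)-1 & \text{if } r=s,\ a_s\leq d_s,\\ \deg(S/L)-1 & \text{if } r=s,\ a_s\geq d_s+1,\\ \deg(S/L)-\sum_{i=2}^{r+1}(d_i-a_i)\cdots(d_s-a_s) & \text{if } r<s,\ a_r\leq d_r,\\ \deg(S/L)-(d_{r+1}-a_{r+1})\cdots(d_s-a_s) & \text{if } r<s,\ a_r\geq d_r+1.\end{cases}$$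
   Context: For a graded ideal $J$ with Hilbert function $H_J(d)=\dim_K(S_d/J_d)$ and $k=\dim(S/J)$, $\deg(S/J)=(k-1)!\lim_{d\to\infty}H_J(d)/d^{k-1}$ if $k\geq1$ and $\dim_K(S/J)$ if $k=0$. In the formulas $a_i=0$ for $i<r$. *)

theory Defs
  imports Complex_Main
begin

text \<open>Monomials of S = K[t_1,...,t_s] are represented by exponent vectors
  m :: nat => nat with support in {1..s}. A monomial ideal is given by a set G of
  monomial generators. Since the quotient S/J of a monomial ideal J has the
  standard monomials (monomials not in J) as a K-basis, its Hilbert function
  H_J(d) = dim_K (S_d/J_d) is the number of standard monomials of degree d.\<close>

definition smonos :: "nat \<Rightarrow> (nat \<Rightarrow> nat) set" where
  "smonos s = {m. \<forall>i. (i < 1 \<or> s < i) \<longrightarrow> m i = 0}"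

definition mdvd :: "(nat \<Rightarrow> nat) \<Rightarrow> (nat \<Rightarrow> nat) \<Rightarrow> bool" where
  "mdvd g m \<longleftrightarrow> (\<forall>i. g i \<le> m i)"

definition in_mideal :: "(nat \<Rightarrow> nat) set \<Rightarrow> (nat \<Rightarrow> nat) \<Rightarrow> bool" where
  "in_mideal G m \<longleftrightarrow> (\<exists>g\<in>G. mdvd g m)"

definition mtdeg :: "nat \<Rightarrow> (nat \<Rightarrow> nat) \<Rightarrow> nat" where
  "mtdeg s m = (\<Sum>i=1..s. m i)"

definition hilb :: "nat \<Rightarrow> (nat \<Rightarrow> nat) set \<Rightarrow> nat \<Rightarrow> real" where
  "hilb s G d = real (card {m \<in> smonos s. mtdeg s m = d \<and> \<not> in_mideal G m})"

text \<open>Krull dimension of S/J, read off from the Hilbert function: k = 0 iff H is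
  eventually 0, otherwise k-1 is the degree of the Hilbert polynomial. Equivalently,
  k is the least k with H(d)/d^k -> 0.\<close>
definition kdim :: "nat \<Rightarrow> (nat \<Rightarrow> nat) set \<Rightarrow> nat" where
  "kdim s G = (LEAST k. (\<lambda>d. hilb s G d / real d ^ k) \<longlonglongrightarrow> 0)"

definition mdegree :: "nat \<Rightarrow> (nat \<Rightarrow> nat) set \<Rightarrow> real" where
  "mdegree s G = (let k = kdim s G in
     if k = 0 then real (card {m \<in> smonos s. \<not> in_mideal G m})
     else fact (k - 1) * lim (\<lambda>d. hilb s G d / real d ^ (k - 1)))"

definition Lgens :: "nat \<Rightarrow> (nat \<Rightarrow> nat) \<Rightarrow> (nat \<Rightarrow> nat) set" where
  "Lgens s dd = {(\<lambda>k. (if k = i then 1 else 0) + (if k = j then dd j else 0)) | i j.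
                   1 \<le> i \<and> i < j \<and> j \<le> s}"

end

theory Submission
  imports Defs "HOL-Library.FuncSet"
begin

text \<open>A monomial outside L whose first variable is t_r' has exponent below d_j on every
  later variable t_j, and once its degree K is fixed, the exponent of t_r' is forced. So for
  K > \<Sum> d_j + \<Sum> a_j the standard monomials of degree K correspond to the pairs (r', e) with
  e_j < d_j for r' < j \<le> s, and those divisible by t^a to the pairs with r' \<le> r and
  a_j \<le> e_j. Both Hilbert functions are therefore eventually constant, both quotients have
  dimension 1, and their degrees are these constants. They differ by
  \<Sum>_{r' \<le> r} \<Prod>_{j > r'} (d_j - a_j); when a_r > d_r only the term r' = r survives.\<close>

lemma of_nat_prod_diff:
  assumes "\<And>j. j \<in> A \<Longrightarrow> g j \<le> f j"
  shows "of_nat (\<Prod>j\<in>A. f j - g j) = (\<Prod>j\<in>A. of_nat (f j) - (of_nat (g j) :: 'a::comm_ring_1))"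
  unfolding of_nat_prod using assms by (intro prod.cong) (auto simp: of_nat_diff)

lemma not_in_mideal_Lgens_iff:
  "\<not> in_mideal (Lgens s dd) m \<longleftrightarrow>
     (\<forall>i j. 1 \<le> i \<and> i < j \<and> j \<le> s \<longrightarrow> m i = 0 \<or> m j < dd j)"
proof -
  have mdvd_gen: "mdvd (\<lambda>k. (if k = i then 1 else 0) + (if k = j then dd j else 0)) m \<longleftrightarrow>
      m i \<noteq> 0 \<and> \<not> m j < dd j" if "i < j" for i j
  proof
    assume "mdvd (\<lambda>k. (if k = i then 1 else 0) + (if k = j then dd j else 0)) m"
    then have "1 \<le> m i" "dd j \<le> m j"
      using that unfolding mdvd_def by (metis add_0_right less_not_refl, metis add_0 less_not_refl)
    then show "m i \<noteq> 0 \<and> \<not> m j < dd j"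
      by simp
  next
    assume "m i \<noteq> 0 \<and> \<not> m j < dd j"
    then show "mdvd (\<lambda>k. (if k = i then 1 else 0) + (if k = j then dd j else 0)) m"
      using that unfolding mdvd_def by simp
  qed
  have "in_mideal (Lgens s dd) m \<longleftrightarrow> (\<exists>i j. 1 \<le> i \<and> i < j \<and> j \<le> s \<and>
      mdvd (\<lambda>k. (if k = i then 1 else 0) + (if k = j then dd j else 0)) m)"
    unfolding in_mideal_def Lgens_def by blast
  also have "\<dots> \<longleftrightarrow> (\<exists>i j. 1 \<le> i \<and> i < j \<and> j \<le> s \<and> m i \<noteq> 0 \<and> \<not> m j < dd j)"
    using mdvd_gen by blast
  finally show ?thesis
    by auto
qed

definition std_multiples :: "nat \<Rightarrow> (nat \<Rightarrow> nat) \<Rightarrow> (nat \<Rightarrow> nat) \<Rightarrow> nat \<Rightarrow> (nat \<Rightarrow> nat) set" where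
  "std_multiples s dd lo K =
     {m \<in> smonos s. mtdeg s m = K \<and> \<not> in_mideal (Lgens s dd) m \<and> mdvd lo m}"

definition lead_var :: "(nat \<Rightarrow> nat) \<Rightarrow> nat" where
  "lead_var m = (LEAST i. 0 < m i)"

definition mono_with_tail :: "nat \<Rightarrow> nat \<Rightarrow> nat \<Rightarrow> (nat \<Rightarrow> nat) \<Rightarrow> nat \<Rightarrow> nat" where
  "mono_with_tail s K r f =
     (\<lambda>i. if r < i \<and> i \<le> s then f i else if i = r then K - (\<Sum>j\<in>{r<..s}. f j) else 0)"

lemma lead_varD:
  assumes "m \<in> smonos s" "0 < mtdeg s m"
  shows "lead_var m \<in> {1..s}" "0 < m (lead_var m)" "\<And>j. j < lead_var m \<Longrightarrow> m j = 0"
proof -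
  have "\<exists>i\<in>{1..s}. m i \<noteq> 0"
    using assms(2) sum.neutral unfolding mtdeg_def by (metis less_irrefl)
  then obtain i where i: "i \<in> {1..s}" "0 < m i"
    by blast
  show pos: "0 < m (lead_var m)"
    unfolding lead_var_def using i(2) by (rule LeastI)
  show "m j = 0" if "j < lead_var m" for j
    using not_less_Least[OF that[unfolded lead_var_def]] by simp
  have "lead_var m \<le> i"
    unfolding lead_var_def using i(2) by (rule Least_le)
  moreover have "m 0 = 0"
    using assms(1) unfolding smonos_def by simp
  ultimately show "lead_var m \<in> {1..s}"
    using i(1) pos by (cases "lead_var m") auto
qed

lemma mtdeg_eq_lead:
  assumes "r \<in> {1..s}" "\<And>j. j < r \<Longrightarrow> m j = 0"
  shows "mtdeg s m = m r + (\<Sum>j\<in>{r<..s}. m j)"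
proof -
  have split: "{1..s} = {1..<r} \<union> insert r {r<..s}"
    using assms(1) by auto
  have "mtdeg s m = (\<Sum>j\<in>{1..<r}. m j) + (\<Sum>j\<in>insert r {r<..s}. m j)"
    unfolding mtdeg_def split by (rule sum.union_disjoint) auto
  moreover have "(\<Sum>j\<in>{1..<r}. m j) = 0"
    using assms(2) by simp
  ultimately show ?thesis
    by simp
qed

lemma mono_with_tail_lead_tail:
  assumes "m \<in> smonos s" "mtdeg s m = K" "0 < K"
  shows "mono_with_tail s K (lead_var m) (restrict m {lead_var m<..s}) = m"
proof
  fix i
  have "0 < mtdeg s m"
    using assms(2,3) by simp
  note lead = lead_varD(1,3)[OF assms(1) this]
  have "K = m (lead_var m) + (\<Sum>j\<in>{lead_var m<..s}. m j)"
    using mtdeg_eq_lead[OF lead] assms(2) by simp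
  moreover have "m i = 0" if "s < i"
    using assms(1) that unfolding smonos_def by simp
  ultimately show "mono_with_tail s K (lead_var m) (restrict m {lead_var m<..s}) i = m i"
    using lead unfolding mono_with_tail_def by (cases i "lead_var m" rule: linorder_cases) auto
qed

lemma lead_var_mono_with_tail:
  assumes "(\<Sum>j\<in>{r<..s}. f j) < K"
  shows "lead_var (mono_with_tail s K r f) = r"
  unfolding lead_var_def
proof (rule Least_equality)
  show "0 < mono_with_tail s K r f r"
    using assms unfolding mono_with_tail_def by simp
  show "r \<le> i" if "0 < mono_with_tail s K r f i" for i
    using that unfolding mono_with_tail_def by (auto split: if_splits)
qed

lemma restrict_mono_with_tail:
  "f \<in> extensional {r<..s} \<Longrightarrow> restrict (mono_with_tail s K r f) {r<..s} = f"
  unfolding mono_with_tail_def by (auto simp: extensional_def)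

lemma sum_tail_le:
  fixes f lo dd :: "nat \<Rightarrow> nat"
  assumes "f \<in> (\<Pi>\<^sub>E j\<in>{r<..s}. {lo j..<dd j})" "1 \<le> r"
  shows "(\<Sum>j\<in>{r<..s}. f j) \<le> (\<Sum>j=1..s. dd j)"
proof -
  have "f j \<le> dd j" if "j \<in> {r<..s}" for j
    using PiE_mem[OF assms(1) that] by simp
  then have "(\<Sum>j\<in>{r<..s}. f j) \<le> (\<Sum>j\<in>{r<..s}. dd j)"
    by (rule sum_mono)
  also have "\<dots> \<le> (\<Sum>j=1..s. dd j)"
    using assms(2) by (intro sum_mono2) auto
  finally show ?thesis .
qed

definition std_tails :: "nat \<Rightarrow> (nat \<Rightarrow> nat) \<Rightarrow> (nat \<Rightarrow> nat) \<Rightarrow> (nat \<times> (nat \<Rightarrow> nat)) set" where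
  "std_tails s dd lo = (SIGMA r:{r\<in>{1..s}. \<forall>j<r. lo j = 0}. \<Pi>\<^sub>E j\<in>{r<..s}. {lo j..<dd j})"

lemma mono_with_tail_in_std_multiples:
  assumes "lo \<in> smonos s" "(r, f) \<in> std_tails s dd lo"
    and K: "(\<Sum>j\<in>{r<..s}. f j) + lo r \<le> K"
  shows "mono_with_tail s K r f \<in> std_multiples s dd lo K"
proof -
  let ?m = "mono_with_tail s K r f"
  have r: "r \<in> {1..s}" "\<And>j. j < r \<Longrightarrow> lo j = 0"
    and f: "f \<in> (\<Pi>\<^sub>E j\<in>{r<..s}. {lo j..<dd j})"
    using assms(2) unfolding std_tails_def by auto
  have lead: "?m j = 0" if "j < r" for j
    using that unfolding mono_with_tail_def by simp
  have "mtdeg s ?m = ?m r + (\<Sum>j\<in>{r<..s}. ?m j)"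
    using r(1) lead by (rule mtdeg_eq_lead)
  also have "\<dots> = K"
    using K unfolding mono_with_tail_def by simp
  finally have "mtdeg s ?m = K" .
  moreover have "?m \<in> smonos s"
    using r(1) unfolding mono_with_tail_def smonos_def by auto
  moreover have "\<forall>i j. 1 \<le> i \<and> i < j \<and> j \<le> s \<longrightarrow> ?m i = 0 \<or> ?m j < dd j"
    using f unfolding mono_with_tail_def by (auto simp: PiE_iff)
  moreover have "mdvd lo ?m"
    using assms(1) r(2) f K unfolding mdvd_def mono_with_tail_def smonos_def
    by (auto simp: PiE_iff not_less)
  ultimately show ?thesis
    unfolding std_multiples_def not_in_mideal_Lgens_iff by blast
qed

lemma lead_tail_in_std_tails:
  assumes "m \<in> std_multiples s dd lo K" "0 < K"
  shows "(lead_var m, restrict m {lead_var m<..s}) \<in> std_tails s dd lo"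
proof -
  have m: "m \<in> smonos s" "mtdeg s m = K" "mdvd lo m"
    and std: "\<forall>i j. 1 \<le> i \<and> i < j \<and> j \<le> s \<longrightarrow> m i = 0 \<or> m j < dd j"
    using assms(1) unfolding std_multiples_def not_in_mideal_Lgens_iff by auto
  note lead = lead_varD[OF m(1), unfolded m(2), OF assms(2)]
  show ?thesis
    unfolding std_tails_def
  proof (rule SigmaI)
    have "lo j = 0" if "j < lead_var m" for j
      using m(3) lead(3)[OF that] unfolding mdvd_def by (metis le_zero_eq)
    then show "lead_var m \<in> {r\<in>{1..s}. \<forall>j<r. lo j = 0}"
      using lead(1) by blast
    show "restrict m {lead_var m<..s} \<in> (\<Pi>\<^sub>E j\<in>{lead_var m<..s}. {lo j..<dd j})"
      using m(3) std lead(1,2) unfolding mdvd_def by fastforce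
  qed
qed

definition std_count :: "nat \<Rightarrow> (nat \<Rightarrow> nat) \<Rightarrow> (nat \<Rightarrow> nat) \<Rightarrow> nat" where
  "std_count s dd lo = (\<Sum>r\<in>{r\<in>{1..s}. \<forall>j<r. lo j = 0}. \<Prod>j\<in>{r<..s}. dd j - lo j)"

lemma bij_betw_std_multiples:
  assumes "lo \<in> smonos s" and K: "(\<Sum>j=1..s. dd j) + (\<Sum>j=1..s. lo j) < K"
  shows "bij_betw (\<lambda>(r, f). mono_with_tail s K r f) (std_tails s dd lo) (std_multiples s dd lo K)"
proof (rule bij_betw_byWitness[where f' = "\<lambda>m. (lead_var m, restrict m {lead_var m<..s})"])
  have tail_bound: "(\<Sum>j\<in>{r<..s}. f j) + lo r < K" if "(r, f) \<in> std_tails s dd lo" for r f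
  proof -
    have r: "r \<in> {1..s}" and f: "f \<in> (\<Pi>\<^sub>E j\<in>{r<..s}. {lo j..<dd j})"
      using that unfolding std_tails_def by auto
    have "lo r \<le> (\<Sum>j=1..s. lo j)"
      using r by (intro member_le_sum) auto
    then show ?thesis
      using sum_tail_le[OF f] r K by auto
  qed
  show "\<forall>x\<in>std_tails s dd lo.
          (\<lambda>m. (lead_var m, restrict m {lead_var m<..s})) ((\<lambda>(r, f). mono_with_tail s K r f) x) = x"
  proof safe
    fix r f assume rf: "(r, f) \<in> std_tails s dd lo"
    then have "lead_var (mono_with_tail s K r f) = r"
      using tail_bound by (intro lead_var_mono_with_tail) fastforce
    moreover have "f \<in> extensional {r<..s}"
      using rf unfolding std_tails_def by (auto simp: PiE_iff)
    ultimately show "lead_var (mono_with_tail s K r f) = r"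
      "restrict (mono_with_tail s K r f) {lead_var (mono_with_tail s K r f)<..s} = f"
      by (simp_all add: restrict_mono_with_tail)
  qed
  show "\<forall>m\<in>std_multiples s dd lo K.
          (\<lambda>(r, f). mono_with_tail s K r f) (lead_var m, restrict m {lead_var m<..s}) = m"
    using K by (auto simp: std_multiples_def mono_with_tail_lead_tail)
  show "(\<lambda>(r, f). mono_with_tail s K r f) ` std_tails s dd lo \<subseteq> std_multiples s dd lo K"
  proof safe
    fix r f assume rf: "(r, f) \<in> std_tails s dd lo"
    show "mono_with_tail s K r f \<in> std_multiples s dd lo K"
      using assms(1) rf less_imp_le[OF tail_bound[OF rf]] by (rule mono_with_tail_in_std_multiples)
  qed
  show "(\<lambda>m. (lead_var m, restrict m {lead_var m<..s})) ` std_multiples s dd lo K \<subseteq> std_tails s dd lo"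
    using K by (auto intro!: lead_tail_in_std_tails)
qed

lemma
  assumes "lo \<in> smonos s" "(\<Sum>j=1..s. dd j) + (\<Sum>j=1..s. lo j) < K"
  shows finite_std_multiples: "finite (std_multiples s dd lo K)"
    and card_std_multiples: "card (std_multiples s dd lo K) = std_count s dd lo"
proof -
  have "finite (std_tails s dd lo)"
    unfolding std_tails_def by (intro finite_SigmaI finite_PiE) auto
  then show "finite (std_multiples s dd lo K)"
    using bij_betw_finite[OF bij_betw_std_multiples[OF assms]] by blast
  have "card (std_multiples s dd lo K) = card (std_tails s dd lo)"
    using bij_betw_same_card[OF bij_betw_std_multiples[OF assms]] by simp
  also have "\<dots> = std_count s dd lo"
    unfolding std_count_def std_tails_def
    by (subst card_SigmaI) (auto simp: card_PiE intro!: finite_PiE)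
  finally show "card (std_multiples s dd lo K) = std_count s dd lo" .
qed

lemma mdegree_eq_eventually_const_hilb:
  assumes "\<forall>\<^sub>F d in sequentially. hilb s G d = c" "c \<noteq> 0"
  shows "mdegree s G = c"
proof -
  have hilb_lim: "(\<lambda>d. hilb s G d) \<longlonglongrightarrow> c"
    using assms(1) by (rule tendsto_eventually)
  have "(\<lambda>d. c / real d) \<longlonglongrightarrow> 0"
    by (intro tendsto_divide_0[OF tendsto_const] filterlim_at_top_imp_at_infinity
        filterlim_real_sequentially)
  then have "(\<lambda>d. hilb s G d / real d ^ 1) \<longlonglongrightarrow> 0"
    by (rule Lim_transform_eventually) (use assms(1) in \<open>auto elim: eventually_mono\<close>)
  moreover have "\<not> (\<lambda>d. hilb s G d / real d ^ 0) \<longlonglongrightarrow> 0"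
    using hilb_lim assms(2) LIMSEQ_unique by fastforce
  ultimately have "kdim s G = 1"
    unfolding kdim_def by (intro Least_equality) (auto simp: Suc_le_eq intro: gr0I)
  then show ?thesis
    unfolding mdegree_def using limI[OF hilb_lim] by simp
qed

lemma hilb_Lgens:
  "hilb s (Lgens s dd) K = real (card (std_multiples s dd (\<lambda>_. 0) K))"
  unfolding hilb_def std_multiples_def mdvd_def by simp

lemma hilb_Lgens_union:
  "hilb s (Lgens s dd \<union> {a}) K
     = real (card (std_multiples s dd (\<lambda>_. 0) K - std_multiples s dd a K))"
  unfolding hilb_def std_multiples_def mdvd_def by (rule arg_cong[where f = "\<lambda>A. real (card A)"])
    (auto simp: in_mideal_def mdvd_def)

lemma std_multiples_mono:
  "mdvd lo' lo \<Longrightarrow> std_multiples s dd lo K \<subseteq> std_multiples s dd lo' K"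
  unfolding std_multiples_def mdvd_def by (auto intro: le_trans)

lemma pure_power_in_std_multiples:
  assumes "p \<in> {1..s}" "\<And>j. p < j \<Longrightarrow> j \<le> s \<Longrightarrow> 0 < dd j"
  shows "(\<lambda>i. if i = p then K else 0) \<in> std_multiples s dd (\<lambda>_. 0) K"
  using assms unfolding std_multiples_def not_in_mideal_Lgens_iff smonos_def mtdeg_def mdvd_def
  by auto

lemma mdegree_Lgens:
  assumes "1 \<le> s"
  shows "mdegree s (Lgens s dd) = real (std_count s dd (\<lambda>_. 0))"
proof (rule mdegree_eq_eventually_const_hilb)
  have zero: "(\<lambda>_. 0) \<in> smonos s"
    unfolding smonos_def by simp
  show "\<forall>\<^sub>F K in sequentially. hilb s (Lgens s dd) K = real (std_count s dd (\<lambda>_. 0))"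
    using eventually_gt_at_top[of "\<Sum>j=1..s. dd j"]
    by eventually_elim (simp add: hilb_Lgens card_std_multiples[OF zero])
  have "(\<Prod>j\<in>{s<..s}. dd j - 0) \<le> std_count s dd (\<lambda>_. 0)"
    unfolding std_count_def using assms by (intro member_le_sum) auto
  then show "real (std_count s dd (\<lambda>_. 0)) \<noteq> 0"
    by simp
qed

lemma std_count_less:
  assumes "2 \<le> s" "\<And>j. j \<in> {1..s} \<Longrightarrow> 0 < dd j"
    and "a \<in> smonos s" "r \<in> {1..s}" "0 < a r"
  shows "std_count s dd a < std_count s dd (\<lambda>_. 0)"
proof -
  define K where "K = Suc ((\<Sum>j=1..s. dd j) + (\<Sum>j=1..s. a j))"
  define p where "p = (if r = 1 then s else 1)"
  have zero: "(\<lambda>_. 0) \<in> smonos s"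
    unfolding smonos_def by simp
  have K_zero: "(\<Sum>j=1..s. dd j) + (\<Sum>j=1..s. (0::nat)) < K"
    and K_a: "(\<Sum>j=1..s. dd j) + (\<Sum>j=1..s. a j) < K"
    unfolding K_def by simp_all
  have p: "p \<in> {1..s}" "p \<noteq> r"
    using assms(1,4) unfolding p_def by auto
  have "(\<lambda>i. if i = p then K else 0) \<in> std_multiples s dd (\<lambda>_. 0) K"
    using p(1) assms(2) by (intro pure_power_in_std_multiples) auto
  moreover have "(\<lambda>i. if i = p then K else 0) \<notin> std_multiples s dd a K"
  proof
    assume "(\<lambda>i. if i = p then K else 0) \<in> std_multiples s dd a K"
    then have "a r \<le> (if r = p then K else 0)"
      unfolding std_multiples_def mdvd_def by blast
    with p(2) assms(5) show False
      by simp
  qed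
  moreover have "std_multiples s dd a K \<subseteq> std_multiples s dd (\<lambda>_. 0) K"
    by (rule std_multiples_mono) (simp add: mdvd_def)
  ultimately have "card (std_multiples s dd a K) < card (std_multiples s dd (\<lambda>_. 0) K)"
    by (intro psubset_card_mono finite_std_multiples[OF zero K_zero]) auto
  then show ?thesis
    by (simp only: card_std_multiples[OF zero K_zero] card_std_multiples[OF assms(3) K_a])
qed

lemma mdegree_Lgens_union:
  assumes "a \<in> smonos s" "std_count s dd a < std_count s dd (\<lambda>_. 0)"
  shows "mdegree s (Lgens s dd \<union> {a}) = real (std_count s dd (\<lambda>_. 0)) - real (std_count s dd a)"
proof (rule mdegree_eq_eventually_const_hilb)
  have zero: "(\<lambda>_. 0) \<in> smonos s"
    unfolding smonos_def by simp
  show "\<forall>\<^sub>F K in sequentially.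
          hilb s (Lgens s dd \<union> {a}) K = real (std_count s dd (\<lambda>_. 0)) - real (std_count s dd a)"
    using eventually_gt_at_top[of "(\<Sum>j=1..s. dd j) + (\<Sum>j=1..s. a j)"]
  proof eventually_elim
    case (elim K)
    then have K_zero: "(\<Sum>j=1..s. dd j) + (\<Sum>j=1..s. (0::nat)) < K"
      by simp
    have "hilb s (Lgens s dd \<union> {a}) K
          = real (card (std_multiples s dd (\<lambda>_. 0) K - std_multiples s dd a K))"
      by (rule hilb_Lgens_union)
    also have "\<dots> = real (card (std_multiples s dd (\<lambda>_. 0) K) - card (std_multiples s dd a K))"
      by (simp add: card_Diff_subset finite_std_multiples[OF assms(1) elim] std_multiples_mono mdvd_def)
    also have "\<dots> = real (std_count s dd (\<lambda>_. 0)) - real (std_count s dd a)"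
      using assms(2)
      by (simp add: card_std_multiples[OF zero K_zero] card_std_multiples[OF assms(1) elim] of_nat_diff)
    finally show ?case .
  qed
  show "real (std_count s dd (\<lambda>_. 0)) - real (std_count s dd a) \<noteq> 0"
    using assms(2) by simp
qed

lemma std_count_eq_sum_prod:
  assumes "r \<in> {1..s}" "\<And>i. i < r \<Longrightarrow> a i = 0" "0 < a r"
  shows "std_count s dd a = (\<Sum>i=2..r+1. \<Prod>j=i..s. dd j - a j)"
proof -
  have "{r'\<in>{1..s}. \<forall>j<r'. a j = 0} = {1..r}"
    using assms by (force simp: not_less)
  then have "std_count s dd a = (\<Sum>r'=1..r. \<Prod>j=Suc r'..s. dd j - a j)"
    unfolding std_count_def by (simp add: atLeastSucAtMost_greaterThanAtMost)
  also have "\<dots> = (\<Sum>i=Suc 1..Suc r. \<Prod>j=i..s. dd j - a j)"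
    by (rule sum.shift_bounds_cl_Suc_ivl[symmetric])
  finally show ?thesis
    by (simp add: numeral_2_eq_2 del: sum.cl_ivl_Suc)
qed

lemma std_count_eq_prod:
  assumes "r \<in> {1..s}" "\<And>i. i < r \<Longrightarrow> a i = 0" "dd r < a r"
  shows "std_count s dd a = (\<Prod>j=r+1..s. dd j - a j)"
proof -
  have "(\<Prod>j=i..s. dd j - a j) = 0" if "2 \<le> i" "i \<le> r" for i
    using that assms(1,3) by (intro prod_zero) (auto intro!: bexI[of _ r])
  then have "(\<Sum>i=2..r. \<Prod>j=i..s. dd j - a j) = 0"
    by simp
  moreover have "std_count s dd a = (\<Sum>i=2..r. \<Prod>j=i..s. dd j - a j) + (\<Prod>j=r+1..s. dd j - a j)"
    using std_count_eq_sum_prod[OF assms(1,2)] assms(1,3) by simp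
  ultimately show ?thesis
    by simp
qed

lemma of_nat_std_count:
  assumes "r \<in> {1..s}" "\<And>i. i < r \<Longrightarrow> a i = 0" "0 < a r"
    and tail: "\<And>i. r < i \<Longrightarrow> i \<le> s \<Longrightarrow> a i < dd i"
  shows "real (std_count s dd a) =
    (if a r \<le> dd r then \<Sum>i=2..r+1. \<Prod>j=i..s. real (dd j) - real (a j)
     else \<Prod>j=r+1..s. real (dd j) - real (a j))"
proof (cases "a r \<le> dd r")
  case True
  have le: "a j \<le> dd j" if "j \<in> {1..s}" for j
    using True assms(2) tail that by (cases j r rule: linorder_cases) (auto intro: less_imp_le)
  have "std_count s dd a = (\<Sum>i=2..r+1. \<Prod>j=i..s. dd j - a j)"
    using assms(1-3) by (rule std_count_eq_sum_prod)
  also have "real \<dots> = (\<Sum>i=2..r+1. \<Prod>j=i..s. real (dd j) - real (a j))"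
    unfolding of_nat_sum by (intro sum.cong refl of_nat_prod_diff) (use le in auto)
  finally show ?thesis
    using True by simp
next
  case False
  have "std_count s dd a = (\<Prod>j=r+1..s. dd j - a j)"
    using assms(1,2) False by (intro std_count_eq_prod) auto
  also have "real \<dots> = (\<Prod>j=r+1..s. real (dd j) - real (a j))"
    by (intro of_nat_prod_diff) (auto simp: Suc_le_eq intro!: less_imp_le tail)
  finally show ?thesis
    using False by simp
qed

lemma std_exponent_less:
  assumes "\<not> in_mideal (Lgens s dd) m" "1 \<le> r" "0 < m r" "r < i" "i \<le> s"
  shows "m i < dd i"
proof -
  have "m r = 0 \<or> m i < dd i"
    using assms unfolding not_in_mideal_Lgens_iff by blast
  with assms(3) show ?thesis
    by simp
qed

theorem proposition5p3:
  fixes s r :: nat and dd a :: "nat \<Rightarrow> nat"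
  assumes "s \<ge> 2"
    and "\<And>i j. 1 \<le> i \<Longrightarrow> i \<le> j \<Longrightarrow> j \<le> s \<Longrightarrow> dd i \<le> dd j"
    and "dd 1 \<ge> 2"
    and "1 \<le> r" and "r \<le> s"
    and "a r \<ge> 1"
    and "\<And>i. i < r \<or> s < i \<Longrightarrow> a i = 0"
    and "\<not> in_mideal (Lgens s dd) a"
  shows "(\<forall>i. r < i \<and> i \<le> s \<longrightarrow> a i \<le> dd i - 1) \<and>
    mdegree s (Lgens s dd \<union> {a}) =
      (if r = s then
         (if a s \<le> dd s
          then mdegree s (Lgens s dd)
                 - (\<Sum>i=2..s. \<Prod>j=i..s. (real (dd j) - real (a j))) - 1
          else mdegree s (Lgens s dd) - 1)
       else
         (if a r \<le> dd r
          then mdegree s (Lgens s dd)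
                 - (\<Sum>i=2..r+1. \<Prod>j=i..s. (real (dd j) - real (a j)))
          else mdegree s (Lgens s dd)
                 - (\<Prod>j=r+1..s. (real (dd j) - real (a j)))))"
proof -
  have r: "r \<in> {1..s}" and a_r: "0 < a r"
    using assms(4-6) by auto
  have a_lead: "\<And>i. i < r \<Longrightarrow> a i = 0" and a: "a \<in> smonos s"
    using assms(4,7) unfolding smonos_def by auto
  have tail: "a i < dd i" if "r < i" "i \<le> s" for i
    using std_exponent_less[OF assms(8,4) a_r that] .
  then have bounds: "\<forall>i. r < i \<and> i \<le> s \<longrightarrow> a i \<le> dd i - 1"
    by (fastforce dest: tail)
  have dd_pos: "0 < dd j" if "j \<in> {1..s}" for j
    using assms(2)[of 1 j] assms(3) that by auto
  have "mdegree s (Lgens s dd \<union> {a}) = mdegree s (Lgens s dd) - real (std_count s dd a)"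
    using mdegree_Lgens_union[OF a std_count_less[OF assms(1) dd_pos a r a_r]]
      mdegree_Lgens[of s dd] assms(1) by simp
  moreover have "real (std_count s dd a) =
      (if a r \<le> dd r then \<Sum>i=2..r+1. \<Prod>j=i..s. real (dd j) - real (a j)
       else \<Prod>j=r+1..s. real (dd j) - real (a j))"
    using r a_lead a_r tail by (rule of_nat_std_count)
  ultimately show ?thesis
    using bounds assms(1) by (cases "r = s") auto
qed

end
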